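(* Let $C$ be an $[n,k,d]$ and $C'$ an $[n',k',d']$ linear code over $\mathbb{F}_q$, let $x \in C \times C'$, $e \in \mathbb{F}_q^{n\times n'}$, $y = x+e$, and suppose $2\sum_{j=1}^{n'} \min\{w(e_j), d\} < d\,d'$. With $\hat{x}$, $\alpha$, $I_E$ and the sets $E_0,\dots,E_J$ as in the context, there exists an index $k \in \{0,1,\dots,J-1\}$ (the same for all rows) such that $$2\,|I_E \setminus E_k| + |E_k| < d',$$ and hence, for every row index $i \in [n]$, $2\, w_{E_k}(\hat{x}^i - x^i) + |E_k| < d'$; that is, an error-and-erasure decoder for $C'$ with erasure set $E_k$ decodes every row $\hat{x}^i$ to $x^i$.
   Context: The product code $C \times C'$ consists of the $n \times n'$ matrices over $\mathbb{F}_q$ all of whose columns lie in $C$ and all of whose rows lie in $C'$. For a matrix $b$, $b_j$ denotes its $j$-th column and $b^i$ its $i$-th row; $w(\cdot)$ is Hamming weight; for $v \in \mathbb{F}_q^{n'}$ and $E \subseteq [n']$, $w_E(v)$ is the number of $j \notin E$ with $v_j \neq 0$. Let $t = \lfloor (d-1)/2 \rfloor$. Column decoding: each column $y_j$ ($j \in [n']$) is decoded by a bounded-distance decoder for $C$, which returns the unique codeword of $C$ within Hamming distance $t$ of $y_j$ if one exists and otherwise declares failure. On success with output $\hat{x}_j$ put $\alpha_j = (d - 2w(y_j - \hat{x}_j))/d$; on failure put $\hat{x}_j = y_j$ and $\alpha_j = 0$. Let $\hat{x}$ be the matrix with columns $\hat{x}_j$, and $I_E \subseteq [n']$ the set of $j$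 for which decoding failed or $\hat{x}_j \neq x_j$. Let $a_1 < a_2 < \dots < a_J$ be the distinct values among $\alpha_1,\dots,\alpha_{n'}$; set $E_0 = \emptyset$ and $E_k = \{ j \in [n'] : \alpha_j \le a_k\}$ for $k \in [J]$. An error-and-erasure decoder for $C'$ with erasure set $E$ returns the unique codeword $c$ with $2w_E(r-c) + |E| < d'$ if it exists. *)

theory Defs
  imports Complex_Main "HOL-Library.Function_Algebras"
begin

text \<open>Vectors of length n over the finite field 'a are functions nat \<Rightarrow> 'a,
  coordinates 0..<n (zero outside).  Matrices n \<times> n' are functions
  nat \<Rightarrow> nat \<Rightarrow> 'a, entry (i,j) with row index i < n, column index j < n'.\<close>

definition vscale :: "'a::field \<Rightarrow> (nat \<Rightarrow> 'a) \<Rightarrow> (nat \<Rightarrow> 'a)" where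
  "vscale c v = (\<lambda>i. c * v i)"

definition supported :: "nat \<Rightarrow> (nat \<Rightarrow> 'a::zero) \<Rightarrow> bool" where
  "supported n v \<longleftrightarrow> (\<forall>i\<ge>n. v i = 0)"

definition hw :: "nat \<Rightarrow> (nat \<Rightarrow> 'a::zero) \<Rightarrow> nat" where
  "hw n v = card {i. i < n \<and> v i \<noteq> 0}"

definition hw_out :: "nat \<Rightarrow> nat set \<Rightarrow> (nat \<Rightarrow> 'a::zero) \<Rightarrow> nat" where
  "hw_out n E v = card {j. j < n \<and> j \<notin> E \<and> v j \<noteq> 0}"

definition hdist :: "nat \<Rightarrow> (nat \<Rightarrow> 'a::ab_group_add) \<Rightarrow> (nat \<Rightarrow> 'a) \<Rightarrow> nat" where
  "hdist n u v = hw n (u - v)"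

definition linear_code :: "nat \<Rightarrow> nat \<Rightarrow> nat \<Rightarrow> (nat \<Rightarrow> 'a::{field,finite}) set \<Rightarrow> bool" where
  "linear_code n k d C \<longleftrightarrow>
     (\<forall>v\<in>C. supported n v) \<and>
     module.subspace vscale C \<and>
     vector_space.dim vscale C = k \<and>
     (\<exists>u\<in>C. \<exists>v\<in>C. u \<noteq> v) \<and>
     d = Min {hdist n u v | u v. u \<in> C \<and> v \<in> C \<and> u \<noteq> v}"

definition col :: "(nat \<Rightarrow> nat \<Rightarrow> 'a) \<Rightarrow> nat \<Rightarrow> (nat \<Rightarrow> 'a)" where
  "col b j = (\<lambda>i. b i j)"

definition row :: "(nat \<Rightarrow> nat \<Rightarrow> 'a) \<Rightarrow> nat \<Rightarrow> (nat \<Rightarrow> 'a)" where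
  "row b i = (\<lambda>j. b i j)"

definition product_code :: "nat \<Rightarrow> nat \<Rightarrow> (nat \<Rightarrow> 'a::zero) set \<Rightarrow> (nat \<Rightarrow> 'a) set
    \<Rightarrow> (nat \<Rightarrow> nat \<Rightarrow> 'a) set" where
  "product_code n n' C C' = {b. (\<forall>i j. (n \<le> i \<or> n' \<le> j) \<longrightarrow> b i j = 0)
       \<and> (\<forall>j<n'. col b j \<in> C) \<and> (\<forall>i<n. row b i \<in> C')}"

definition bd_decode :: "nat \<Rightarrow> nat \<Rightarrow> (nat \<Rightarrow> 'a::ab_group_add) set \<Rightarrow> (nat \<Rightarrow> 'a)
    \<Rightarrow> (nat \<Rightarrow> 'a) option" where
  "bd_decode n d C y =
     (if \<exists>!c. c \<in> C \<and> hdist n y c \<le> (d - 1) div 2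
      then Some (THE c. c \<in> C \<and> hdist n y c \<le> (d - 1) div 2) else None)"

definition col_out :: "nat \<Rightarrow> nat \<Rightarrow> (nat \<Rightarrow> 'a::ab_group_add) set \<Rightarrow> (nat \<Rightarrow> 'a) \<Rightarrow> (nat \<Rightarrow> 'a)" where
  "col_out n d C y = (case bd_decode n d C y of Some c \<Rightarrow> c | None \<Rightarrow> y)"

definition reliab :: "nat \<Rightarrow> nat \<Rightarrow> (nat \<Rightarrow> 'a::ab_group_add) set \<Rightarrow> (nat \<Rightarrow> 'a) \<Rightarrow> real" where
  "reliab n d C y = (case bd_decode n d C y of
       Some c \<Rightarrow> (real d - 2 * real (hw n (y - c))) / real d | None \<Rightarrow> 0)"

definition erasure_set :: "nat \<Rightarrow> (nat \<Rightarrow> real) \<Rightarrow> nat \<Rightarrow> nat set" where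
  "erasure_set n' \<alpha> k =
     (if k = 0 then {}
      else {j. j < n' \<and> \<alpha> j \<le> sorted_list_of_set (\<alpha> ` {..<n'}) ! (k - 1)})"

definition ee_decode :: "nat \<Rightarrow> nat \<Rightarrow> (nat \<Rightarrow> 'a::ab_group_add) set \<Rightarrow> nat set \<Rightarrow> (nat \<Rightarrow> 'a)
    \<Rightarrow> (nat \<Rightarrow> 'a) option" where
  "ee_decode n' d' C' E r =
     (if \<exists>!c. c \<in> C' \<and> 2 * hw_out n' E (r - c) + card E < d'
      then Some (THE c. c \<in> C' \<and> 2 * hw_out n' E (r - c) + card E < d') else None)"

end

theory Submission
  imports Defs
begin

text \<open>Write \<beta>_j = -\<alpha>_j if column j is in error (j \<in> I_E) and \<beta>_j = \<alpha>_j otherwise. A case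
  analysis on the bounded-distance decoder gives 1 - \<beta>_j \<le> 2 min(w(e_j), d) / d, so the
  hypothesis yields \<Sum>_j (1 - \<beta>_j) < d'. Padding the levels by a_0 = 0 and a_(J+1) = 1, this
  sum equals \<Sum>_(k=0..J) (a_(k+1) - a_k) (|E_k| + 2 |I_E - E_k|), an average with nonnegative
  weights summing to 1. As E_J erases all n' \<ge> d' positions, some k < J has
  |E_k| + 2 |I_E - E_k| < d'. Outside E_k every row of xh - x is supported in I_E, and within
  that radius the error-and-erasure decoder of C' is unique.\<close>

lemma hw_out_empty [simp]: "hw_out n {} v = hw n v"
  by (simp add: hw_out_def hw_def)

lemma hw_out_add: "hw_out n E (u + v) \<le> hw_out n E u + hw_out n E (v :: nat \<Rightarrow> 'a::monoid_add)"
proof -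
  have "hw_out n E (u + v)
      \<le> card ({i. i < n \<and> i \<notin> E \<and> u i \<noteq> 0} \<union> {i. i < n \<and> i \<notin> E \<and> v i \<noteq> 0})"
    unfolding hw_out_def by (intro card_mono) auto
  also have "\<dots> \<le> hw_out n E u + hw_out n E v"
    unfolding hw_out_def by (rule card_Un_le)
  finally show ?thesis .
qed

lemma hw_out_minus_commute: "hw_out n E (u - v) = hw_out n E (v - (u :: nat \<Rightarrow> 'a::ab_group_add))"
proof -
  have "{i. i < n \<and> i \<notin> E \<and> (u - v) i \<noteq> 0} = {i. i < n \<and> i \<notin> E \<and> (v - u) i \<noteq> 0}"
    by auto
  then show ?thesis unfolding hw_out_def by simp
qed

lemma hw_out_triangle:
  "hw_out n E (u - w) \<le> hw_out n E (u - v) + hw_out n E (v - (w :: nat \<Rightarrow> 'a::ab_group_add))"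
  using hw_out_add[of n E "u - v" "v - w"] by simp

lemma hw_minus_commute: "hw n (u - v) = hw n (v - (u :: nat \<Rightarrow> 'a::ab_group_add))"
  using hw_out_minus_commute[of n "{}"] by simp

lemma hw_triangle: "hw n (u - w) \<le> hw n (u - v) + hw n (v - (w :: nat \<Rightarrow> 'a::ab_group_add))"
  using hw_out_triangle[of n "{}"] by simp

lemma hw_le_hw_out_card: "E \<subseteq> {..<n} \<Longrightarrow> hw n v \<le> hw_out n E v + card E"
proof -
  assume "E \<subseteq> {..<n}"
  then have "hw n v \<le> card ({i. i < n \<and> i \<notin> E \<and> v i \<noteq> 0} \<union> E)"
    unfolding hw_def by (intro card_mono) (auto intro: finite_subset)
  also have "\<dots> \<le> hw_out n E v + card E" unfolding hw_out_def by (rule card_Un_le)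
  finally show ?thesis .
qed

lemma hw_out_le_card_Diff:
  assumes "finite S" and "\<And>j. j < n \<Longrightarrow> j \<notin> E \<Longrightarrow> v j \<noteq> 0 \<Longrightarrow> j \<in> S"
  shows "hw_out n E v \<le> card (S - E)"
  unfolding hw_out_def using assms by (intro card_mono) auto

lemma hw_le: "hw n v \<le> n"
  using card_mono[of "{..<n}" "{i. i < n \<and> v i \<noteq> 0}"] by (auto simp: hw_def)

lemma finite_hdists: "finite {hdist n u v | u v. u \<in> C \<and> v \<in> C \<and> u \<noteq> v}"
  by (rule finite_subset[of _ "{..n}"]) (auto simp: hdist_def hw_le)

lemma linear_code_min_dist:
  assumes "linear_code n k d C" "u \<in> C" "v \<in> C" "u \<noteq> v"
  shows "d \<le> hdist n u v"
  using assms finite_hdists[of n C] unfolding linear_code_def by (auto intro!: Min_le)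

lemma linear_code_eq_if_hw_less:
  assumes "linear_code n k d C" "u \<in> C" "v \<in> C" "hw n (u - v) < d"
  shows "u = v"
  using linear_code_min_dist[OF assms(1-3)] assms(4) unfolding hdist_def by force

lemma linear_code_min_dist_bounds:
  assumes C: "linear_code n k d C"
  shows "1 \<le> d" "d \<le> n"
proof -
  have "{hdist n u v | u v. u \<in> C \<and> v \<in> C \<and> u \<noteq> v} \<noteq> {}"
    using C unfolding linear_code_def by blast
  then have "d \<in> {hdist n u v | u v. u \<in> C \<and> v \<in> C \<and> u \<noteq> v}"
    using C Min_in[OF finite_hdists[of n C]] unfolding linear_code_def by simp
  then obtain u v where uv: "u \<in> C" "v \<in> C" "u \<noteq> v" "d = hdist n u v" by blast
  then obtain i where i: "u i \<noteq> v i" by auto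
  with uv C have "i < n" unfolding linear_code_def supported_def by (metis not_le)
  with i have "0 < hdist n u v"
    unfolding hdist_def hw_def by (subst card_gt_0_iff) auto
  with uv show "1 \<le> d" by simp
  show "d \<le> n" using uv hw_le by (simp add: hdist_def)
qed

lemma unique_choice_eq_Some:
  assumes "P x" and "\<And>c. P c \<Longrightarrow> c = x"
  shows "(if \<exists>!c. P c then Some (THE c. P c) else None) = Some x"
  using assms by (metis the_equality)

lemma bd_decode_SomeI:
  assumes C: "linear_code n k d C" and c: "c \<in> C" and close: "hdist n y c \<le> (d - 1) div 2"
  shows "bd_decode n d C y = Some c"
  unfolding bd_decode_def
proof (rule unique_choice_eq_Some)
  fix c' assume c': "c' \<in> C \<and> hdist n y c' \<le> (d - 1) div 2"
  have "hw n (c' - c) \<le> hw n (y - c') + hw n (y - c)"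
    using hw_triangle[where n = n and u = c' and v = y and w = c] hw_minus_commute[of n c' y] by simp
  moreover have "2 * ((d - 1) div 2) \<le> d - 1" by simp
  ultimately have "hw n (c' - c) < d"
    using c' close linear_code_min_dist_bounds(1)[OF C] unfolding hdist_def by linarith
  then show "c' = c" using linear_code_eq_if_hw_less[OF C] c c' by blast
qed (use c close in simp)

lemma bd_decode_SomeD:
  assumes "bd_decode n d C y = Some c"
  shows "c \<in> C" "hdist n y c \<le> (d - 1) div 2"
proof -
  have ex: "\<exists>!c. c \<in> C \<and> hdist n y c \<le> (d - 1) div 2"
    using assms unfolding bd_decode_def by (metis option.distinct(1))
  have "c = (THE c. c \<in> C \<and> hdist n y c \<le> (d - 1) div 2)"
    using assms ex unfolding bd_decode_def by simp
  then show "c \<in> C" "hdist n y c \<le> (d - 1) div 2" using theI'[OF ex] by simp_all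
qed

lemma ee_decode_SomeI:
  assumes C: "linear_code n' k' d' C'" and x: "x \<in> C'" and E: "E \<subseteq> {..<n'}"
    and close: "2 * hw_out n' E (r - x) + card E < d'"
  shows "ee_decode n' d' C' E r = Some x"
  unfolding ee_decode_def
proof (rule unique_choice_eq_Some)
  fix c assume c: "c \<in> C' \<and> 2 * hw_out n' E (r - c) + card E < d'"
  have "hw n' (c - x) \<le> hw_out n' E (r - c) + hw_out n' E (r - x) + card E"
    using hw_le_hw_out_card[OF E, of "c - x"] hw_out_triangle[where n = n' and E = E and u = c and v = r and w = x]
      hw_out_minus_commute[of n' E c r] by simp
  with c close have "hw n' (c - x) < d'" by linarith
  then show "c = x" using linear_code_eq_if_hw_less[OF C] c x by blast
qed (use x close in simp)

lemma reliab_bounds: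
  assumes "1 \<le> d"
  shows "0 \<le> reliab n d C y" "reliab n d C y \<le> 1"
proof -
  have "0 \<le> reliab n d C y \<and> reliab n d C y \<le> 1"
  proof (cases "bd_decode n d C y")
    case (Some c)
    then have "2 * hw n (y - c) < d"
      using bd_decode_SomeD(2)[OF Some] assms by (simp add: hdist_def)
    with assms show ?thesis by (simp add: reliab_def Some field_simps)
  qed (simp add: reliab_def)
  then show "0 \<le> reliab n d C y" "reliab n d C y \<le> 1" by simp_all
qed

lemma reliab_error_bound:
  assumes C: "linear_code n k d C" and c: "c \<in> C"
  shows "1 - (if bd_decode n d C y = None \<or> col_out n d C y \<noteq> c
              then - reliab n d C y else reliab n d C y)
         \<le> 2 * real (min (hw n (y - c)) d) / real d"
proof -
  define w where "w = hw n (y - c)"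
  have d1: "1 \<le> d" and t: "2 * ((d - 1) div 2) \<le> d - 1"
    using linear_code_min_dist_bounds(1)[OF C] by simp_all
  then have dpos: "0 < real d" by simp
  show ?thesis
  proof (cases "bd_decode n d C y")
    case None
    then have "\<not> w \<le> (d - 1) div 2"
      using bd_decode_SomeI[OF C c] by (auto simp: w_def hdist_def)
    then have "real d \<le> 2 * real (min w d)" using t d1 by linarith
    then show ?thesis using None dpos by (simp add: reliab_def w_def le_divide_eq)
  next
    case (Some c')
    define s where "s = hw n (y - c')"
    have "s \<le> (d - 1) div 2" using bd_decode_SomeD(2)[OF Some] by (simp add: s_def hdist_def)
    then have sd: "2 * s < d" using t d1 by linarith
    have \<alpha>: "reliab n d C y = (real d - 2 * real s) / real d"
      by (simp add: reliab_def Some s_def)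
    show ?thesis
    proof (cases "c' = c")
      case True
      then have "min w d = s" using sd by (simp add: w_def s_def)
      then show ?thesis using True Some \<alpha> dpos by (simp add: col_out_def w_def field_simps)
    next
      case False
      have "d \<le> hw n (c' - c)"
        using linear_code_min_dist[OF C bd_decode_SomeD(1)[OF Some] c False] by (simp add: hdist_def)
      also have "\<dots> \<le> s + w"
        using hw_triangle[where n = n and u = c' and v = y and w = c] hw_minus_commute[of n c' y]
        by (simp add: s_def w_def)
      finally have "real d - real s \<le> real (min w d)" by linarith
      then show ?thesis using False Some \<alpha> dpos by (simp add: col_out_def w_def field_simps)
    qed
  qed
qed

lemma sorted_wrt_less_nth_le_iff:
  fixes xs :: "'a::linorder list"
  assumes "sorted_wrt (<) xs" "i < length xs" "k < length xs"
  shows "xs ! i \<le> xs ! k \<longleftrightarrow> i \<le> k"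
  using sorted_wrt_nth_less[OF assms(1), of i k] sorted_wrt_nth_less[OF assms(1), of k i] assms(2,3)
  by (cases i k rule: linorder_cases) auto

definition erasure_threshold :: "nat \<Rightarrow> (nat \<Rightarrow> real) \<Rightarrow> nat \<Rightarrow> real" where
  "erasure_threshold n' \<alpha> k =
     (if k = 0 then 0
      else if k \<le> card (\<alpha> ` {..<n'}) then sorted_list_of_set (\<alpha> ` {..<n'}) ! (k - 1)
      else 1)"

lemma erasure_threshold_0 [simp]: "erasure_threshold n' \<alpha> 0 = 0"
  by (simp add: erasure_threshold_def)

lemma erasure_threshold_Suc_card [simp]:
  "erasure_threshold n' \<alpha> (Suc (card (\<alpha> ` {..<n'}))) = 1"
  by (simp add: erasure_threshold_def)

lemma erasure_set_subset: "erasure_set n' \<alpha> k \<subseteq> {..<n'}"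
  by (auto simp: erasure_set_def)

lemma erasure_threshold_rank:
  assumes j: "j < n'"
  obtains m where "0 < m" "m \<le> card (\<alpha> ` {..<n'})" "erasure_threshold n' \<alpha> m = \<alpha> j"
    "\<And>k. k \<le> card (\<alpha> ` {..<n'}) \<Longrightarrow> j \<in> erasure_set n' \<alpha> k \<longleftrightarrow> m \<le> k"
proof -
  define L where "L = sorted_list_of_set (\<alpha> ` {..<n'})"
  have L: "sorted_wrt (<) L" "length L = card (\<alpha> ` {..<n'})" "set L = \<alpha> ` {..<n'}"
    by (simp_all add: L_def strict_sorted_list_of_set)
  obtain i where i: "i < length L" "L ! i = \<alpha> j"
    using j L(3) by (metis imageI in_set_conv_nth lessThan_iff)
  have "j \<in> erasure_set n' \<alpha> k \<longleftrightarrow> Suc i \<le> k" if "k \<le> length L" for k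
  proof (cases k)
    case (Suc k')
    then have "j \<in> erasure_set n' \<alpha> k \<longleftrightarrow> L ! i \<le> L ! k'"
      using i j by (simp add: erasure_set_def L_def)
    also have "\<dots> \<longleftrightarrow> i \<le> k'"
      using sorted_wrt_less_nth_le_iff[OF L(1), of i k'] i that Suc by simp
    finally show ?thesis using Suc by simp
  qed (simp add: erasure_set_def)
  moreover have "erasure_threshold n' \<alpha> (Suc i) = \<alpha> j"
    using i L(2) by (simp add: erasure_threshold_def L_def)
  ultimately show ?thesis using that[of "Suc i"] i L(2) by simp
qed

lemma erasure_threshold_mono:
  assumes \<alpha>: "\<forall>j<n'. 0 \<le> \<alpha> j \<and> \<alpha> j \<le> 1" and k: "k \<le> card (\<alpha> ` {..<n'})"
  shows "erasure_threshold n' \<alpha> k \<le> erasure_threshold n' \<alpha> (Suc k)"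
proof -
  define L where "L = sorted_list_of_set (\<alpha> ` {..<n'})"
  have L: "sorted_wrt (<) L" "length L = card (\<alpha> ` {..<n'})" "set L = \<alpha> ` {..<n'}"
    by (simp_all add: L_def strict_sorted_list_of_set)
  have L01: "0 \<le> L ! i \<and> L ! i \<le> 1" if "i < length L" for i
    using nth_mem[OF that] L(3) \<alpha> by auto
  consider "k = 0" | "0 < k" "k < length L" | "0 < k" "k = length L"
    using k L(2) by linarith
  then show ?thesis
  proof cases
    case 2
    then show ?thesis
      using sorted_wrt_less_nth_le_iff[OF L(1), of "k - 1" k] L(2)
      by (simp add: erasure_threshold_def L_def)
  qed (use L01 L(2) in \<open>auto simp: erasure_threshold_def L_def\<close>)
qed

lemma sum_telescope_step_weights:
  fixes b :: "nat \<Rightarrow> real"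
  assumes "m \<le> J" and "\<And>k. k \<le> J \<Longrightarrow> P k \<longleftrightarrow> m \<le> k"
  shows "(\<Sum>k<Suc J. (b (Suc k) - b k) * (if P k then 1 else c))
       = (b (Suc J) - b m) + c * (b m - b 0)"
proof -
  let ?f = "\<lambda>k. (b (Suc k) - b k) * (if P k then 1 else c)"
  have "(\<Sum>k<Suc J. ?f k) = (\<Sum>k=0..<m. ?f k) + (\<Sum>k=m..<Suc J. ?f k)"
    using assms(1) by (simp add: sum.atLeastLessThan_concat lessThan_atLeast0)
  also have "(\<Sum>k=0..<m. ?f k) = c * (\<Sum>k=0..<m. b (Suc k) - b k)"
    using assms by (simp add: sum_distrib_left mult.commute)
  also have "(\<Sum>k=m..<Suc J. ?f k) = (\<Sum>k=m..<Suc J. b (Suc k) - b k)"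
    using assms by (intro sum.cong) auto
  also have "c * (\<Sum>k=0..<m. b (Suc k) - b k) + (\<Sum>k=m..<Suc J. b (Suc k) - b k)
      = c * (b m - b 0) + (b (Suc J) - b m)"
    using assms(1) by (simp add: sum_Suc_diff')
  finally show ?thesis by simp
qed

lemma erasure_set_card_avg:
  fixes \<alpha> :: "nat \<Rightarrow> real"
  assumes IE: "IE \<subseteq> {..<n'}"
  defines "J \<equiv> card (\<alpha> ` {..<n'})" and "a \<equiv> erasure_threshold n' \<alpha>" and "E \<equiv> erasure_set n' \<alpha>"
  shows "(\<Sum>k<Suc J. (a (Suc k) - a k) * real (card (E k) + 2 * card (IE - E k)))
       = (\<Sum>j<n'. 1 - (if j \<in> IE then - \<alpha> j else \<alpha> j))"
proof -
  define g where "g k j = (if j \<in> E k then 1 else if j \<in> IE then 2 else (0::real))" for k j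
  have count: "real (card (E k) + 2 * card (IE - E k)) = (\<Sum>j<n'. g k j)" for k
  proof -
    have "(\<Sum>j<n'. g k j) = (\<Sum>j<n'. of_bool (j \<in> E k) + 2 * of_bool (j \<in> IE - E k))"
      by (intro sum.cong) (auto simp: g_def)
    also have "\<dots> = real (card ({..<n'} \<inter> E k)) + 2 * real (card ({..<n'} \<inter> (IE - E k)))"
      by (simp add: sum.distrib sum_distrib_left[symmetric] Int_def)
    also have "{..<n'} \<inter> E k = E k"
      using erasure_set_subset[of n' \<alpha> k] by (auto simp: E_def)
    also have "{..<n'} \<inter> (IE - E k) = IE - E k"
      using IE by auto
    finally show ?thesis by simp
  qed
  have column: "(\<Sum>k<Suc J. (a (Suc k) - a k) * g k j) = 1 - (if j \<in> IE then - \<alpha> j else \<alpha> j)"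
    if "j < n'" for j
  proof -
    obtain m where m: "0 < m" "m \<le> J" "a m = \<alpha> j" "\<And>k. k \<le> J \<Longrightarrow> j \<in> E k \<longleftrightarrow> m \<le> k"
      using erasure_threshold_rank[OF \<open>j < n'\<close>] unfolding J_def a_def E_def by blast
    have "(\<Sum>k<Suc J. (a (Suc k) - a k) * g k j)
        = (a (Suc J) - a m) + (if j \<in> IE then 2 else 0) * (a m - a 0)"
      unfolding g_def by (rule sum_telescope_step_weights) (use m in auto)
    then show ?thesis using m by (simp add: a_def J_def)
  qed
  have "(\<Sum>k<Suc J. (a (Suc k) - a k) * real (card (E k) + 2 * card (IE - E k)))
      = (\<Sum>k<Suc J. (a (Suc k) - a k) * (\<Sum>j<n'. g k j))"
    by (simp only: count)
  also have "\<dots> = (\<Sum>j<n'. \<Sum>k<Suc J. (a (Suc k) - a k) * g k j)"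
    by (simp add: sum_distrib_left sum.swap[of _ "{..<n'}"])
  also have "\<dots> = (\<Sum>j<n'. 1 - (if j \<in> IE then - \<alpha> j else \<alpha> j))"
    by (intro sum.cong refl column) simp
  finally show ?thesis .
qed

lemma exists_erasure_set_within_radius:
  fixes \<alpha> :: "nat \<Rightarrow> real"
  assumes IE: "IE \<subseteq> {..<n'}" and \<alpha>: "\<forall>j<n'. 0 \<le> \<alpha> j \<and> \<alpha> j \<le> 1" and "d' \<le> n'"
    and below: "(\<Sum>j<n'. 1 - (if j \<in> IE then - \<alpha> j else \<alpha> j)) < real d'"
  shows "\<exists>k < card (\<alpha> ` {..<n'}).
           2 * card (IE - erasure_set n' \<alpha> k) + card (erasure_set n' \<alpha> k) < d'"
proof (rule ccontr)
  assume none: "\<not> ?thesis"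
  define J where "J = card (\<alpha> ` {..<n'})"
  define a where "a = erasure_threshold n' \<alpha>"
  define E where "E = erasure_set n' \<alpha>"
  have "E J = {..<n'}"
    using erasure_set_subset[of n' \<alpha> J] erasure_threshold_rank[of _ n' \<alpha>]
    unfolding E_def J_def by (metis lessThan_iff order.refl subsetI subset_antisym)
  then have ge: "real d' \<le> real (card (E k) + 2 * card (IE - E k))" if "k < Suc J" for k
  proof (cases "k = J")
    case False
    with that have "k < J" by simp
    with none have "d' \<le> 2 * card (IE - E k) + card (E k)"
      unfolding E_def J_def by (meson not_less)
    then show ?thesis by simp
  qed (use \<open>d' \<le> n'\<close> in simp)
  have "real d' = (\<Sum>k<Suc J. (a (Suc k) - a k) * real d')"
    by (simp add: sum_distrib_right[symmetric] sum_lessThan_telescope a_def J_def)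
  also have "\<dots> \<le> (\<Sum>k<Suc J. (a (Suc k) - a k) * real (card (E k) + 2 * card (IE - E k)))"
    using erasure_threshold_mono[OF \<alpha>] ge
    by (intro sum_mono mult_left_mono) (auto simp: a_def J_def)
  also have "\<dots> = (\<Sum>j<n'. 1 - (if j \<in> IE then - \<alpha> j else \<alpha> j))"
    unfolding a_def E_def J_def by (rule erasure_set_card_avg[OF IE])
  finally show False using below by simp
qed

lemma sum_below_if_scaled_sum_below:
  fixes f :: "nat \<Rightarrow> real" and w :: "nat \<Rightarrow> nat"
  assumes "0 < d" and "\<And>j. j < n' \<Longrightarrow> f j \<le> 2 * real (w j) / real d"
    and "2 * (\<Sum>j<n'. w j) < d * d'"
  shows "(\<Sum>j<n'. f j) < real d'"
proof -
  have "(\<Sum>j<n'. f j) \<le> (\<Sum>j<n'. 2 * real (w j) / real d)"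
    using assms(2) by (intro sum_mono) simp
  also have "\<dots> = real (2 * (\<Sum>j<n'. w j)) / real d"
    by (simp add: sum_divide_distrib[symmetric] sum_distrib_left)
  also have "\<dots> < real d'"
    using assms(1,3) by (simp add: divide_less_eq mult.commute flip: of_nat_mult)
  finally show ?thesis .
qed

theorem mainTheorem3:
  fixes C C' :: "(nat \<Rightarrow> 'a::{field,finite}) set"
    and n k d n' k' d' :: nat
    and x e :: "nat \<Rightarrow> nat \<Rightarrow> 'a"
  assumes "linear_code n k d C"
    and "linear_code n' k' d' C'"
    and "x \<in> product_code n n' C C'"
    and "\<forall>i j. (n \<le> i \<or> n' \<le> j) \<longrightarrow> e i j = 0"
    and "2 * (\<Sum>j<n'. min (hw n (col e j)) d) < d * d'"
  shows
    "let y = x + e;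
         xh = (\<lambda>i j. col_out n d C (col y j) i);
         \<alpha> = (\<lambda>j. reliab n d C (col y j));
         IE = {j. j < n' \<and> (bd_decode n d C (col y j) = None \<or> col xh j \<noteq> col x j)};
         J = card (\<alpha> ` {..<n'});
         E = erasure_set n' \<alpha>
     in \<exists>k<J. 2 * card (IE - E k) + card (E k) < d'
              \<and> (\<forall>i<n. 2 * hw_out n' (E k) (row xh i - row x i) + card (E k) < d')
              \<and> (\<forall>i<n. ee_decode n' d' C' (E k) (row xh i) = Some (row x i))"
proof -
  define y where "y = x + e"
  define xh where "xh = (\<lambda>i j. col_out n d C (col y j) i)"
  define \<alpha> where "\<alpha> = (\<lambda>j. reliab n d C (col y j))"
  define IE where "IE = {j. j < n' \<and> (bd_decode n d C (col y j) = None \<or> col xh j \<noteq> col x j)}"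
  define E where "E = erasure_set n' \<alpha>"
  note d = linear_code_min_dist_bounds(1)[OF assms(1)]
    and d' = linear_code_min_dist_bounds(2)[OF assms(2)]
  have x: "\<And>j. j < n' \<Longrightarrow> col x j \<in> C" "\<And>i. i < n \<Longrightarrow> row x i \<in> C'"
    using assms(3) unfolding product_code_def by auto
  have cols: "col y j - col x j = col e j" "col xh j = col_out n d C (col y j)" for j
    by (auto simp: y_def xh_def col_def)
  have "1 - (if j \<in> IE then - \<alpha> j else \<alpha> j) \<le> 2 * real (min (hw n (col e j)) d) / real d"
    if "j < n'" for j
  proof -
    have "j \<in> IE \<longleftrightarrow> bd_decode n d C (col y j) = None \<or> col_out n d C (col y j) \<noteq> col x j"
      using that by (simp add: IE_def cols)
    then show ?thesis
      using reliab_error_bound[OF assms(1) x(1)[OF that], of "col y j"] by (simp only: \<alpha>_def cols)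
  qed
  then have "(\<Sum>j<n'. 1 - (if j \<in> IE then - \<alpha> j else \<alpha> j)) < real d'"
    using d by (intro sum_below_if_scaled_sum_below[OF _ _ assms(5)]) simp_all
  moreover have IE: "IE \<subseteq> {..<n'}" by (auto simp: IE_def)
  ultimately obtain k where k: "k < card (\<alpha> ` {..<n'})" "2 * card (IE - E k) + card (E k) < d'"
    using exists_erasure_set_within_radius[of IE n' \<alpha> d'] reliab_bounds[OF d] d'
    unfolding E_def \<alpha>_def by blast
  have "hw_out n' (E k) (row xh i - row x i) \<le> card (IE - E k)" for i
    using IE by (intro hw_out_le_card_Diff) (auto simp: IE_def row_def col_def fun_eq_iff intro: finite_subset)
  then have rows: "\<forall>i<n. 2 * hw_out n' (E k) (row xh i - row x i) + card (E k) < d'"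
    using k(2) by (meson add_le_mono1 le_less_trans mult_le_mono2)
  moreover have "\<forall>i<n. ee_decode n' d' C' (E k) (row xh i) = Some (row x i)"
    using rows ee_decode_SomeI[OF assms(2) x(2)] erasure_set_subset by (simp add: E_def)
  ultimately show ?thesis
    using k unfolding Let_def y_def[symmetric] xh_def[symmetric] \<alpha>_def[symmetric]
      IE_def[symmetric] E_def[symmetric] by blast
qed

end
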